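(* For variables $a,b,\alpha,\beta$ and any natural number $n\ge1$, \[ \frac{1}{\lfloor n/2\rfloor!}\Big(\alpha\frac{\partial}{\partial a}+\beta\frac{\partial}{\partial b}\Big)^{\lfloor n/2\rfloor}\Psi(a,b,n)=\Psi(\alpha,\beta,n),\qquad \frac{1}{\lfloor (n-1)/2\rfloor!}\Big(\alpha\frac{\partial}{\partial a}+\beta\frac{\partial}{\partial b}\Big)^{\lfloor (n-1)/2\rfloor}\Phi(a,b,n)=\Phi(\alpha,\beta,n), \] where $\alpha,\beta$ are treated as constants under $\partial/\partial a,\partial/\partial b$.
   Context: $\delta(m)=1$ for $m$ odd, $0$ for $m$ even; $\lfloor\cdot\rfloor$ is the floor. $\Psi(a,b,n)$, $\Phi(a,b,n)$ are the polynomials in $a,b$ defined by $\Psi(a,b,0)=2$, $\Psi(a,b,1)=1$, $\Psi(a,b,n+1)=(2a-b)^{\delta(n)}\Psi(a,b,n)-a\Psi(a,b,n-1)$ and $\Phi(a,b,0)=0$, $\Phi(a,b,1)=1$, $\Phi(a,b,n+1)=(2a-b)^{\delta(n+1)}\Phi(a,b,n)-a\Phi(a,b,n-1)$ for $n\ge1$. *)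

theory Defs
  imports "HOL-Analysis.Analysis"
begin

definition delta :: "nat \<Rightarrow> nat" where
  "delta m = (if odd m then 1 else 0)"

fun Psi :: "'a::comm_ring_1 \<Rightarrow> 'a \<Rightarrow> nat \<Rightarrow> 'a" where
  "Psi a b 0 = 2"
| "Psi a b (Suc 0) = 1"
| "Psi a b (Suc (Suc m)) =
     (2 * a - b) ^ delta (Suc m) * Psi a b (Suc m) - a * Psi a b m"

fun Phi :: "'a::comm_ring_1 \<Rightarrow> 'a \<Rightarrow> nat \<Rightarrow> 'a" where
  "Phi a b 0 = 0"
| "Phi a b (Suc 0) = 1"
| "Phi a b (Suc (Suc m)) =
     (2 * a - b) ^ delta (Suc (Suc m)) * Phi a b (Suc m) - a * Phi a b m"

definition dirD :: "real \<Rightarrow> real \<Rightarrow> (real \<Rightarrow> real \<Rightarrow> real) \<Rightarrow> (real \<Rightarrow> real \<Rightarrow> real)" where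
  "dirD \<alpha> \<beta> f = (\<lambda>x y. \<alpha> * deriv (\<lambda>t. f t y) x + \<beta> * deriv (\<lambda>t. f x t) y)"

end

theory Submission
  imports Defs
begin

text \<open>Each step of the recursions multiplies the previous term by the linear form \<open>2a - b\<close> or
  not, according to the parity of the index, and subtracts \<open>a\<close> times the term two steps back.
  Hence \<open>\<Psi>(a,b,n)\<close> is a homogeneous polynomial of degree \<open>\<lfloor>n/2\<rfloor>\<close> and \<open>\<Phi>(a,b,n)\<close> one of
  degree \<open>\<lfloor>(n-1)/2\<rfloor>\<close>. The operator \<open>D = \<alpha>\<partial>/\<partial>a + \<beta>\<partial>/\<partial>b\<close> maps homogeneous polynomials of
  degree \<open>d + 1\<close> to ones of degree \<open>d\<close> and satisfies Euler's identity \<open>(Df)(\<alpha>,\<beta>) = d f(\<alpha>,\<beta>)\<close>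
  in degree \<open>d\<close>; hence \<open>D\<^sup>d f\<close> is the constant \<open>d! f(\<alpha>,\<beta>)\<close>.\<close>

inductive hom_polyfun :: "nat \<Rightarrow> (real \<Rightarrow> real \<Rightarrow> real) \<Rightarrow> bool" where
  const: "hom_polyfun 0 (\<lambda>x y. c)"
| mult_linear: "hom_polyfun d f \<Longrightarrow> hom_polyfun (Suc d) (\<lambda>x y. (p * x + q * y) * f x y)"
| scale: "hom_polyfun d f \<Longrightarrow> hom_polyfun d (\<lambda>x y. c * f x y)"
| add: "hom_polyfun d f \<Longrightarrow> hom_polyfun d g \<Longrightarrow> hom_polyfun d (\<lambda>x y. f x y + g x y)"

lemma hom_polyfun_0_const: "hom_polyfun 0 f \<Longrightarrow> f x y = f u v"
  by (induction "0::nat" f rule: hom_polyfun.induct) simp_all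

lemma hom_polyfun_mult_fst: "hom_polyfun d f \<Longrightarrow> hom_polyfun (Suc d) (\<lambda>x y. x * f x y)"
  using hom_polyfun.mult_linear[of d f 1 0] by simp

lemma hom_polyfun_diff:
  "hom_polyfun d f \<Longrightarrow> hom_polyfun d g \<Longrightarrow> hom_polyfun d (\<lambda>x y. f x y - g x y)"
  using hom_polyfun.add[OF _ hom_polyfun.scale[of d g "-1"], of f] by simp

lemma hom_polyfun_mult_linear_power:
  "hom_polyfun d f \<Longrightarrow> hom_polyfun (d + k) (\<lambda>x y. (p * x + q * y) ^ k * f x y)"
proof (induction k)
  case 0
  then show ?case by simp
next
  case (Suc k)
  then show ?case
    using hom_polyfun.mult_linear[of "d + k" _ p q] by (simp add: mult.assoc)
qed

definition partially_differentiable :: "(real \<Rightarrow> real \<Rightarrow> real) \<Rightarrow> bool" where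
  "partially_differentiable f \<longleftrightarrow>
     (\<forall>x y. (\<lambda>t. f t y) field_differentiable at x \<and> (\<lambda>t. f x t) field_differentiable at y)"

lemma hom_polyfun_partially_differentiable: "hom_polyfun d f \<Longrightarrow> partially_differentiable f"
  by (induction rule: hom_polyfun.induct)
     (auto simp: partially_differentiable_def intro!: field_differentiable_mult
        field_differentiable_add field_differentiable_const field_differentiable_ident)

lemma dirD_const: "dirD \<alpha> \<beta> (\<lambda>x y. c) = (\<lambda>x y. 0)"
  unfolding dirD_def by simp

lemma dirD_mult_linear:
  assumes "partially_differentiable f"
  shows "dirD \<alpha> \<beta> (\<lambda>x y. (p * x + q * y) * f x y)
           = (\<lambda>x y. (p * \<alpha> + q * \<beta>) * f x y + (p * x + q * y) * dirD \<alpha> \<beta> f x y)"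
proof (intro ext)
  fix x y
  have fx: "(\<lambda>t. f t y) field_differentiable at x"
    and fy: "(\<lambda>t. f x t) field_differentiable at y"
    using assms unfolding partially_differentiable_def by blast+
  have "deriv (\<lambda>t. (p * t + q * y) * f t y) x
      = p * f x y + (p * x + q * y) * deriv (\<lambda>t. f t y) x"
    using fx by (subst deriv_mult) (auto intro!: derivative_intros)
  moreover have "deriv (\<lambda>t. (p * x + q * t) * f x t) y
      = q * f x y + (p * x + q * y) * deriv (\<lambda>t. f x t) y"
    using fy by (subst deriv_mult) (auto intro!: derivative_intros)
  ultimately show "dirD \<alpha> \<beta> (\<lambda>x y. (p * x + q * y) * f x y) x y
      = (p * \<alpha> + q * \<beta>) * f x y + (p * x + q * y) * dirD \<alpha> \<beta> f x y"
    unfolding dirD_def by (simp add: algebra_simps)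
qed

lemma dirD_scale:
  "partially_differentiable f \<Longrightarrow> dirD \<alpha> \<beta> (\<lambda>x y. c * f x y) = (\<lambda>x y. c * dirD \<alpha> \<beta> f x y)"
  unfolding dirD_def partially_differentiable_def
  by (auto simp: algebra_simps field_differentiable_const intro!: ext)

lemma dirD_add:
  "partially_differentiable f \<Longrightarrow> partially_differentiable g
    \<Longrightarrow> dirD \<alpha> \<beta> (\<lambda>x y. f x y + g x y) = (\<lambda>x y. dirD \<alpha> \<beta> f x y + dirD \<alpha> \<beta> g x y)"
  unfolding dirD_def partially_differentiable_def
  by (auto simp: algebra_simps intro!: ext)

lemma dirD_hom_polyfun: "hom_polyfun (Suc d) f \<Longrightarrow> hom_polyfun d (dirD \<alpha> \<beta> f)"
proof (induction "Suc d" f arbitrary: d rule: hom_polyfun.induct)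
  case (mult_linear d f p q)
  note f = \<open>hom_polyfun d f\<close>
  have "hom_polyfun d (\<lambda>x y. (p * \<alpha> + q * \<beta>) * f x y + (p * x + q * y) * dirD \<alpha> \<beta> f x y)"
  proof (cases d)
    case 0
    then have "f = (\<lambda>x y. f 0 0)"
      using f hom_polyfun_0_const by blast
    then have "dirD \<alpha> \<beta> f = (\<lambda>x y. 0)"
      by (metis dirD_const)
    then show ?thesis using f 0 by (simp add: hom_polyfun.scale)
  next
    case (Suc e)
    then show ?thesis
      using f mult_linear.hyps(2) by (auto intro!: hom_polyfun.intros)
  qed
  then show ?case
    using f by (simp add: dirD_mult_linear hom_polyfun_partially_differentiable)
next
  case (scale f c)
  then show ?case
    by (simp add: dirD_scale hom_polyfun_partially_differentiable hom_polyfun.scale)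
next
  case (add f g)
  then show ?case
    by (simp add: dirD_add hom_polyfun_partially_differentiable hom_polyfun.add)
qed

lemma hom_polyfun_euler_identity: "hom_polyfun d f \<Longrightarrow> dirD \<alpha> \<beta> f \<alpha> \<beta> = d * f \<alpha> \<beta>"
proof (induction rule: hom_polyfun.induct)
  case (const c)
  then show ?case by (simp add: dirD_const)
next
  case (mult_linear d f p q)
  have "dirD \<alpha> \<beta> (\<lambda>x y. (p * x + q * y) * f x y) \<alpha> \<beta>
      = (p * \<alpha> + q * \<beta>) * f \<alpha> \<beta> + (p * \<alpha> + q * \<beta>) * dirD \<alpha> \<beta> f \<alpha> \<beta>"
    using mult_linear.hyps by (simp add: dirD_mult_linear hom_polyfun_partially_differentiable)
  then show ?case
    using mult_linear.IH by (simp add: algebra_simps)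
next
  case (scale d f c)
  then show ?case by (simp add: dirD_scale hom_polyfun_partially_differentiable)
next
  case (add d f g)
  then show ?case
    by (simp add: dirD_add hom_polyfun_partially_differentiable algebra_simps)
qed

lemma funpow_dirD_hom_polyfun:
  "hom_polyfun d f \<Longrightarrow> (dirD \<alpha> \<beta> ^^ d) f a b = fact d * f \<alpha> \<beta>"
proof (induction d arbitrary: f)
  case 0
  then show ?case using hom_polyfun_0_const by simp
next
  case (Suc d)
  have "(dirD \<alpha> \<beta> ^^ Suc d) f a b = (dirD \<alpha> \<beta> ^^ d) (dirD \<alpha> \<beta> f) a b"
    by (simp add: funpow_Suc_right del: funpow.simps)
  also have "\<dots> = fact d * dirD \<alpha> \<beta> f \<alpha> \<beta>"
    using Suc dirD_hom_polyfun by blast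
  also have "\<dots> = fact (Suc d) * f \<alpha> \<beta>"
    using Suc.prems by (simp add: hom_polyfun_euler_identity)
  finally show ?case .
qed

lemma hom_polyfun_Psi: "hom_polyfun (n div 2) (\<lambda>x y. Psi x y n)"
proof (induction n rule: induct_nat_012)
  case (ge2 m)
  have deg: "Suc m div 2 + delta (Suc m) = Suc (Suc m) div 2" "Suc (m div 2) = Suc (Suc m) div 2"
    by (auto simp: delta_def elim: oddE)
  have "hom_polyfun (Suc (Suc m) div 2) (\<lambda>x y. (2 * x - y) ^ delta (Suc m) * Psi x y (Suc m))"
    using hom_polyfun_mult_linear_power[OF ge2(2), where p=2 and q="-1" and k="delta (Suc m)"]
    unfolding deg by simp
  moreover have "hom_polyfun (Suc (Suc m) div 2) (\<lambda>x y. x * Psi x y m)"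
    using hom_polyfun_mult_fst[OF ge2(1)] unfolding deg by simp
  ultimately show ?case by (simp add: hom_polyfun_diff)
qed (auto intro: hom_polyfun.const)

lemma hom_polyfun_Phi: "hom_polyfun ((n - 1) div 2) (\<lambda>x y. Phi x y n)"
proof (induction n rule: induct_nat_012)
  case (ge2 m)
  show ?case
  proof (cases "m = 0")
    case True
    \<comment> \<open>the subtracted term \<open>a \<Phi>(a,b,0)\<close> vanishes but would have degree 1\<close>
    then show ?thesis by (simp add: numeral_2_eq_2 delta_def hom_polyfun.const)
  next
    case False
    then have deg: "(Suc m - 1) div 2 + delta (Suc (Suc m)) = (Suc (Suc m) - 1) div 2"
        "Suc ((m - 1) div 2) = (Suc (Suc m) - 1) div 2"
      by (auto simp: delta_def elim: oddE evenE)
    have "hom_polyfun ((Suc (Suc m) - 1) div 2)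
        (\<lambda>x y. (2 * x - y) ^ delta (Suc (Suc m)) * Phi x y (Suc m))"
      using hom_polyfun_mult_linear_power[OF ge2(2),
          where p=2 and q="-1" and k="delta (Suc (Suc m))"]
      unfolding deg by simp
    moreover have "hom_polyfun ((Suc (Suc m) - 1) div 2) (\<lambda>x y. x * Phi x y m)"
      using hom_polyfun_mult_fst[OF ge2(1)] unfolding deg by simp
    ultimately show ?thesis by (simp add: hom_polyfun_diff)
  qed
qed (auto intro: hom_polyfun.const)

theorem theorem8p5:
  fixes a b \<alpha> \<beta> :: real and n :: nat
  assumes "n \<ge> 1"
  shows "((dirD \<alpha> \<beta> ^^ (n div 2)) (\<lambda>x y. Psi x y n)) a b / fact (n div 2) = Psi \<alpha> \<beta> n
       \<and> ((dirD \<alpha> \<beta> ^^ ((n - 1) div 2)) (\<lambda>x y. Phi x y n)) a b / fact ((n - 1) div 2)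
           = Phi \<alpha> \<beta> n"
  using funpow_dirD_hom_polyfun[OF hom_polyfun_Psi] funpow_dirD_hom_polyfun[OF hom_polyfun_Phi]
  by simp

end
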